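(* Let $y_1,\dots,y_n$ be real-valued and $n$ times continuously differentiable on an open interval $I$, and let $x\in I$. With $W_n(x)=\det\big(y_j^{(i-1)}(x)\big)_{i,j=1}^n$ and $C_n^h(x)=\det\big(y_j(x+(i-1)h)\big)_{i,j=1}^n$: if $W_n(x)>0$ (resp. $W_n(x)<0$), then there is $h_0>0$ such that $C_n^h(x)>0$ (resp. $C_n^h(x)<0$) for all $0<h<h_0$. *)

theory Defs
  imports "HOL-Analysis.Analysis" "Jordan_Normal_Form.Determinant"
begin

text \<open>f is n times continuously differentiable on the (open) set I:
  the derivatives of order 0..n-1 exist at every point of I (so that the iterated
  deriv really is the k-th derivative) and the n-th derivative is continuous on I.\<close>
definition C_n_on :: "nat \<Rightarrow> real set \<Rightarrow> (real \<Rightarrow> real) \<Rightarrow> bool" where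
  "C_n_on n I f \<longleftrightarrow>
     (\<forall>k<n. \<forall>t\<in>I. ((deriv ^^ k) f) differentiable (at t)) \<and>
     (\<forall>k\<le>n. continuous_on I ((deriv ^^ k) f))"

definition wronskian :: "nat \<Rightarrow> (nat \<Rightarrow> real \<Rightarrow> real) \<Rightarrow> real \<Rightarrow> real" where
  "wronskian n y x = det (mat n n (\<lambda>(i, j). (deriv ^^ i) (y j) x))"

definition casoratian :: "nat \<Rightarrow> (nat \<Rightarrow> real \<Rightarrow> real) \<Rightarrow> real \<Rightarrow> real \<Rightarrow> real" where
  "casoratian n y h x = det (mat n n (\<lambda>(i, j). y j (x + real i * h)))"

end

theory Submission
  imports Defs
begin

text \<open>Row operations turn the Casoratian into \<open>h^(0 + 1 + \<dots> + (n-1))\<close> times the determinant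
  of the scaled forward differences \<open>\<Delta>_h^i y_j(x) / h^i\<close>. By the mean value theorem for
  forward differences, \<open>\<Delta>_h^i y_j(x) / h^i = y_j^(i)(\<xi>)\<close> for some \<open>\<xi> \<in> [x, x + i h]\<close>, so these
  entries tend to \<open>y_j^(i)(x)\<close> as \<open>h \<rightarrow> 0+\<close>. Hence the determinant tends to the Wronskian,
  and the positive factor does not change its sign.\<close>

fun fwd_diff :: "real \<Rightarrow> (real \<Rightarrow> real) \<Rightarrow> nat \<Rightarrow> real \<Rightarrow> real" where
  "fwd_diff h f 0 t = f t"
| "fwd_diff h f (Suc i) t = fwd_diff h f i (t + h) - fwd_diff h f i t"

text \<open>The coefficient of \<open>f (t + k h)\<close> in \<open>fwd_diff h f i t\<close>, namely \<open>(-1)^(i-k) * (i choose k)\<close>;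
  only its unitriangularity matters.\<close>
fun fwd_diff_coeff :: "nat \<Rightarrow> nat \<Rightarrow> real" where
  "fwd_diff_coeff 0 k = (if k = 0 then 1 else 0)"
| "fwd_diff_coeff (Suc i) k =
     (case k of 0 \<Rightarrow> 0 | Suc k' \<Rightarrow> fwd_diff_coeff i k') - fwd_diff_coeff i k"

lemma fwd_diff_coeff_above_diag: "i < k \<Longrightarrow> fwd_diff_coeff i k = 0"
  by (induction i arbitrary: k) (auto split: nat.splits)

lemma fwd_diff_coeff_diag [simp]: "fwd_diff_coeff i i = 1"
  by (induction i) (auto simp: fwd_diff_coeff_above_diag)

lemma fwd_diff_eq_sum:
  "i < N \<Longrightarrow> fwd_diff h f i t = (\<Sum>k=0..<N. fwd_diff_coeff i k * f (t + real k * h))"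
proof (induction i arbitrary: N t)
  case 0
  then show ?case by (simp add: sum.atLeast_Suc_lessThan)
next
  case (Suc i)
  then obtain M where N: "N = Suc M" and "i < M" by (cases N) auto
  let ?shift = "\<lambda>k. case k of 0 \<Rightarrow> 0 | Suc k' \<Rightarrow> fwd_diff_coeff i k'"
  have "fwd_diff h f i (t + h) = (\<Sum>k=0..<M. fwd_diff_coeff i k * f (t + real (Suc k) * h))"
    using Suc.IH[OF \<open>i < M\<close>, of "t + h"] by (simp add: algebra_simps)
  also have "\<dots> = (\<Sum>k=0..<N. ?shift k * f (t + real k * h))"
    unfolding N atLeast0LessThan sum.lessThan_Suc_shift by simp
  finally have "fwd_diff h f i (t + h) = (\<Sum>k=0..<N. ?shift k * f (t + real k * h))" .
  moreover have "fwd_diff h f i t = (\<Sum>k=0..<N. fwd_diff_coeff i k * f (t + real k * h))"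
    using Suc by simp
  ultimately show ?case
    by (simp only: fwd_diff.simps fwd_diff_coeff.simps left_diff_distrib sum_subtractf)
qed

lemma has_real_derivative_fwd_diff:
  assumes "\<And>k. k \<le> i \<Longrightarrow> f differentiable (at (t + real k * h))"
  shows "(fwd_diff h f i has_real_derivative fwd_diff h (deriv f) i t) (at t)"
  using assms
proof (induction i arbitrary: t)
  case 0
  then show ?case using DERIV_deriv_iff_real_differentiable by force
next
  case (Suc i)
  have "(fwd_diff h f i has_real_derivative fwd_diff h (deriv f) i (t + h)) (at (t + h))"
    using Suc.IH Suc.prems[of "Suc _"] by (simp add: algebra_simps)
  then have "((\<lambda>s. fwd_diff h f i (s + h)) has_real_derivative fwd_diff h (deriv f) i (t + h)) (at t)"
    using DERIV_shift by blast
  moreover have "(fwd_diff h f i has_real_derivative fwd_diff h (deriv f) i t) (at t)"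
    using Suc by simp
  ultimately show ?case using DERIV_diff by fastforce
qed

lemma funpow_deriv_Suc: "(deriv ^^ k) (deriv f) = deriv ((deriv ^^ k) f)"
  by (metis funpow_Suc_right funpow.simps(2) o_apply)

lemma fwd_diff_mean_value:
  assumes "h > 0"
    and "\<And>k t. k < i \<Longrightarrow> a \<le> t \<Longrightarrow> t \<le> a + real i * h \<Longrightarrow> (deriv ^^ k) f differentiable (at t)"
  shows "\<exists>\<xi>. a \<le> \<xi> \<and> \<xi> \<le> a + real i * h \<and> fwd_diff h f i a = h ^ i * (deriv ^^ i) f \<xi>"
  using assms(2)
proof (induction i arbitrary: f a)
  case 0
  then show ?case by auto
next
  case (Suc i)
  have "(fwd_diff h f i has_real_derivative fwd_diff h (deriv f) i t) (at t)"
    if "a \<le> t" "t \<le> a + h" for t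
  proof (rule has_real_derivative_fwd_diff)
    fix k assume "k \<le> i"
    then have "0 \<le> real k * h" "real k * h \<le> real i * h"
      using assms(1) by (simp_all add: mult_right_mono)
    then have "a \<le> t + real k * h" "t + real k * h \<le> a + real (Suc i) * h"
      using that by (linarith, simp add: distrib_right)
    then show "f differentiable at (t + real k * h)"
      using Suc.prems[of 0] by simp
  qed
  then obtain \<eta> where \<eta>: "a < \<eta>" "\<eta> < a + h"
    "fwd_diff h f i (a + h) - fwd_diff h f i a = h * fwd_diff h (deriv f) i \<eta>"
    using MVT2[of a "a + h" "fwd_diff h f i"] assms(1) by auto
  have "\<exists>\<xi>. \<eta> \<le> \<xi> \<and> \<xi> \<le> \<eta> + real i * h \<and>
      fwd_diff h (deriv f) i \<eta> = h ^ i * (deriv ^^ i) (deriv f) \<xi>"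
  proof (rule Suc.IH)
    fix k t assume "k < i" "\<eta> \<le> t" "t \<le> \<eta> + real i * h"
    then show "(deriv ^^ k) (deriv f) differentiable at t"
      using Suc.prems[of "Suc k" t] \<eta> by (auto simp: funpow_deriv_Suc algebra_simps)
  qed
  then obtain \<xi> where "\<eta> \<le> \<xi>" "\<xi> \<le> \<eta> + real i * h"
    "fwd_diff h (deriv f) i \<eta> = h ^ i * (deriv ^^ i) (deriv f) \<xi>" by blast
  with \<eta> show ?case
    by (intro exI[of _ \<xi>]) (auto simp: funpow_deriv_Suc algebra_simps)
qed

lemma tendsto_fwd_diff_over_power:
  assumes "open I" "x \<in> I"
    and "\<And>k t. k < i \<Longrightarrow> t \<in> I \<Longrightarrow> (deriv ^^ k) f differentiable (at t)"
    and "isCont ((deriv ^^ i) f) x"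
  shows "((\<lambda>h. fwd_diff h f i x / h ^ i) \<longlongrightarrow> (deriv ^^ i) f x) (at_right 0)"
proof (rule tendstoI)
  fix e :: real assume "e > 0"
  with assms(4) obtain d where "d > 0"
    and d: "\<And>t. dist t x < d \<Longrightarrow> dist ((deriv ^^ i) f t) ((deriv ^^ i) f x) < e"
    unfolding continuous_at_eps_delta by blast
  obtain r where "r > 0" "ball x r \<subseteq> I" using assms(1,2) openE by blast
  define b where "b = min d r / (real i + 1)"
  show "\<forall>\<^sub>F h in at_right 0. dist (fwd_diff h f i x / h ^ i) ((deriv ^^ i) f x) < e"
    unfolding eventually_at_right_field
  proof (intro exI[of _ b] conjI allI impI)
    show "b > 0" using \<open>d > 0\<close> \<open>r > 0\<close> by (simp add: b_def)
    fix h :: real assume h: "0 < h" "h < b"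
    then have "(real i + 1) * h < min d r"
      unfolding b_def by (simp add: field_simps)
    then have "real i * h < d" "real i * h < r" using h by (auto simp: algebra_simps)
    moreover have "(deriv ^^ k) f differentiable (at t)"
      if "k < i" "x \<le> t" "t \<le> x + real i * h" for k t
    proof -
      have "t \<in> ball x r" using that \<open>real i * h < r\<close> by (auto simp: dist_real_def)
      then show ?thesis using assms(3) \<open>ball x r \<subseteq> I\<close> \<open>k < i\<close> by blast
    qed
    then obtain \<xi> where "x \<le> \<xi>" "\<xi> \<le> x + real i * h"
      and "fwd_diff h f i x = h ^ i * (deriv ^^ i) f \<xi>"
      using fwd_diff_mean_value[OF h(1)] by blast
    ultimately show "dist (fwd_diff h f i x / h ^ i) ((deriv ^^ i) f x) < e"
      using d h by (simp add: dist_real_def)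
  qed
qed

lemma det_mat_leibniz:
  "det (mat n n (\<lambda>(i, j). f i j :: 'a :: comm_ring_1)) =
     (\<Sum>p\<in>{p. p permutes {0..<n}}. signof p * (\<Prod>i=0..<n. f i (p i)))"
proof -
  have "p i < n" if "p permutes {0..<n}" "i < n" for p i
    using that permutes_in_image by fastforce
  then show ?thesis
    by (auto simp: det_def'[of _ n] intro!: sum.cong prod.cong)
qed

lemma tendsto_det_mat:
  fixes a :: "nat \<Rightarrow> nat \<Rightarrow> 'a :: {real_normed_algebra_1, comm_ring_1}"
  assumes "\<And>i j. i < n \<Longrightarrow> j < n \<Longrightarrow> ((\<lambda>h. f h i j) \<longlongrightarrow> a i j) F"
  shows "((\<lambda>h. det (mat n n (\<lambda>(i, j). f h i j))) \<longlongrightarrow> det (mat n n (\<lambda>(i, j). a i j))) F"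
  unfolding det_mat_leibniz
proof (intro tendsto_sum tendsto_mult_left tendsto_prod)
  fix p i assume "p \<in> {p. p permutes {0..<n}}" "i \<in> {0..<n}"
  then have "i < n" "p i < n" using permutes_in_image by fastforce+
  then show "((\<lambda>h. f h i (p i)) \<longlongrightarrow> a i (p i)) F" using assms by blast
qed

lemma det_mat_scale_rows:
  "det (mat n n (\<lambda>(i, j). c i * f i j :: 'a :: comm_ring_1)) =
     (\<Prod>i=0..<n. c i) * det (mat n n (\<lambda>(i, j). f i j))"
  unfolding det_mat_leibniz sum_distrib_left
  by (rule sum.cong[OF refl]) (simp add: prod.distrib)

lemma casoratian_eq_det_fwd_diff:
  "casoratian n y h x = det (mat n n (\<lambda>(i, j). fwd_diff h (y j) i x))"
proof -
  define L where "L = mat n n (\<lambda>(i, k). fwd_diff_coeff i k)"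
  define C where "C = mat n n (\<lambda>(i, j). y j (x + real i * h))"
  have "L * C = mat n n (\<lambda>(i, j). fwd_diff h (y j) i x)"
    by (rule eq_matI) (auto simp: L_def C_def scalar_prod_def fwd_diff_eq_sum)
  moreover have "diag_mat L = replicate n 1"
    by (simp add: diag_mat_def L_def list_eq_iff_nth_eq)
  then have "det L = 1"
    using det_lower_triangular[of n L] by (simp add: L_def fwd_diff_coeff_above_diag)
  ultimately show ?thesis
    using det_mult[of L n C] by (simp add: casoratian_def L_def C_def)
qed

lemma casoratian_eq_scaled_det:
  assumes "h \<noteq> 0"
  shows "casoratian n y h x =
    (\<Prod>i=0..<n. h ^ i) * det (mat n n (\<lambda>(i, j). fwd_diff h (y j) i x / h ^ i))"
  using det_mat_scale_rows[of n "\<lambda>i. h ^ i" "\<lambda>i j. fwd_diff h (y j) i x / h ^ i"] assms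
  by (simp add: casoratian_eq_det_fwd_diff)

lemma tendsto_scaled_casoratian:
  assumes "open I" "x \<in> I" "\<And>j. j < n \<Longrightarrow> C_n_on n I (y j)"
  shows "((\<lambda>h. casoratian n y h x / (\<Prod>i=0..<n. h ^ i)) \<longlongrightarrow> wronskian n y x) (at_right 0)"
proof -
  have "((\<lambda>h. det (mat n n (\<lambda>(i, j). fwd_diff h (y j) i x / h ^ i))) \<longlongrightarrow> wronskian n y x)
      (at_right 0)"
    unfolding wronskian_def
  proof (intro tendsto_det_mat tendsto_fwd_diff_over_power[OF assms(1,2)])
    fix i j assume "i < n" "j < n"
    then show "\<And>k t. k < i \<Longrightarrow> t \<in> I \<Longrightarrow> (deriv ^^ k) (y j) differentiable (at t)"
      and "isCont ((deriv ^^ i) (y j)) x"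
      using assms(1,2) assms(3)[of j] by (auto simp: C_n_on_def continuous_on_eq_continuous_at)
  qed
  moreover have "\<forall>\<^sub>F h in at_right 0. det (mat n n (\<lambda>(i, j). fwd_diff h (y j) i x / h ^ i)) =
      casoratian n y h x / (\<Prod>i=0..<n. h ^ i)"
    using eventually_at_right_less[of 0] by eventually_elim (simp add: casoratian_eq_scaled_det)
  ultimately show ?thesis by (rule Lim_transform_eventually)
qed

theorem mainTheorem8:
  fixes n :: nat and y :: "nat \<Rightarrow> real \<Rightarrow> real" and I :: "real set" and x :: real
  assumes "open I" and "is_interval I"
    and "\<And>j. j < n \<Longrightarrow> C_n_on n I (y j)"
    and "x \<in> I"
  shows "(wronskian n y x > 0 \<longrightarrow>
            (\<exists>h0>0. \<forall>h. 0 < h \<and> h < h0 \<longrightarrow> casoratian n y h x > 0)) \<and>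
         (wronskian n y x < 0 \<longrightarrow>
            (\<exists>h0>0. \<forall>h. 0 < h \<and> h < h0 \<longrightarrow> casoratian n y h x < 0))"
proof -
  let ?q = "\<lambda>h. casoratian n y h x / (\<Prod>i=0..<n. h ^ i)"
  have lim: "(?q \<longlongrightarrow> wronskian n y x) (at_right 0)"
    using tendsto_scaled_casoratian assms(1,3,4) by blast
  have eventually_pos: "\<forall>\<^sub>F h in at_right 0. 0 < (\<Prod>i=0..<n. h ^ i :: real)"
    using eventually_at_right_less[of 0] by eventually_elim (auto intro: prod_pos)
  show ?thesis
  proof (intro conjI impI)
    assume "wronskian n y x > 0"
    with lim have "\<forall>\<^sub>F h in at_right 0. 0 < ?q h" by (rule order_tendstoD)
    with eventually_pos have "\<forall>\<^sub>F h in at_right 0. 0 < casoratian n y h x"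
      by eventually_elim (simp add: zero_less_divide_iff)
    then show "\<exists>h0>0. \<forall>h. 0 < h \<and> h < h0 \<longrightarrow> casoratian n y h x > 0"
      unfolding eventually_at_right_field by blast
  next
    assume "wronskian n y x < 0"
    with lim have "\<forall>\<^sub>F h in at_right 0. ?q h < 0" by (rule order_tendstoD)
    with eventually_pos have "\<forall>\<^sub>F h in at_right 0. casoratian n y h x < 0"
      by eventually_elim (simp add: divide_less_0_iff)
    then show "\<exists>h0>0. \<forall>h. 0 < h \<and> h < h0 \<longrightarrow> casoratian n y h x < 0"
      unfolding eventually_at_right_field by blast
  qed
qed

end
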